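(* Let $n\in\mathbb{N}\cup\{0\}$, $0\le i\le n-1$ and $\alpha>-1$. Let $t_1<\dots<t_n$ be the zeros of $L_n^{(\alpha)}$. Then $$\int_0^\infty\frac{t^i}{i!}|\ell_n^{(\alpha)}(t)|\,dt=2\sum_{m=1}^n(-1)^{m+1}\sum_{k=0}^i\frac{(-1)^k}{(i-k)!}\,t_m^{i-k}\,\ell_{n-1-k}^{(\alpha+1+k)}(t_m).$$
   Context: The generalized Laguerre polynomials are $L_n^{(\alpha)}(t)=\sum_{k=0}^n(-1)^k\binom{n+\alpha}{n-k}\frac{t^k}{k!}$, and the Laguerre functions are $\ell_n^{(\alpha)}(t)=\frac{n!}{\Gamma(n+\alpha+1)}t^{\alpha}e^{-t}L_n^{(\alpha)}(t)$ for $t>0$. For $\alpha>-1$ the zeros of $L_n^{(\alpha)}$ are real, simple and positive. *)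

theory Defs
  imports "HOL-Analysis.Analysis"
begin

definition laguerre :: "nat \<Rightarrow> real \<Rightarrow> real \<Rightarrow> real" where
  "laguerre n \<alpha> t = (\<Sum>k=0..n. (-1)^k * ((real n + \<alpha>) gchoose (n - k)) * t^k / fact k)"

definition laguerre_fun :: "nat \<Rightarrow> real \<Rightarrow> real \<Rightarrow> real" where
  "laguerre_fun n \<alpha> t = fact n / Gamma (real n + \<alpha> + 1) * t powr \<alpha> * exp (- t) * laguerre n \<alpha> t"

end

theory Submission
  imports Defs "HOL-Real_Asymp.Real_Asymp" "HOL-Computational_Algebra.Polynomial"
begin

(* Differentiating the coefficient formula shows (l_p^(b+1))' = l_(p+1)^(b), so with a telescoping
   sum the function F(t) = sum_(k<=i) (-1)^k t^(i-k)/(i-k)! l_(n-1-k)^(a+1+k)(t) is a primitive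
   of t^i/i! l_n^(a)(t) on (0, oo) that vanishes at 0+ and at oo. Writing L_n^(a) as its leading
   coefficient times the product of (t - t_m), positivity of L_n^(a)(0) shows that
   |l_n^(a)| = (-1)^j l_n^(a) between consecutive nodes t_j < t_(j+1), where t_0 = 0 and
   t_(n+1) = oo. Integrating over each such interval and summing gives the alternating sum
   sum_j (-1)^j (F(t_(j+1)) - F(t_j)) = 2 sum_m (-1)^(m+1) F(t_m). *)

lemma gbinomial_pos:
  fixes a :: real
  assumes "real k < a + 1"
  shows "0 < a gchoose k"
  unfolding gbinomial_pochhammer' using assms by (intro divide_pos_pos pochhammer_pos) auto

lemma Suc_times_gbinomial_Suc:
  "of_nat (Suc k) * (a gchoose Suc k) = (a - of_nat k) * (a gchoose k :: 'a :: field_char_0)"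
  using gbinomial_mult_1[of a k] by (simp add: algebra_simps)

definition laguerre_poly :: "nat \<Rightarrow> real \<Rightarrow> real poly" where
  "laguerre_poly n \<alpha> = (\<Sum>k\<le>n. monom ((-1)^k * ((real n + \<alpha>) gchoose (n - k)) / fact k) k)"

lemma coeff_laguerre_poly:
  "coeff (laguerre_poly n \<alpha>) k =
     (if k \<le> n then (-1)^k * ((real n + \<alpha>) gchoose (n - k)) / fact k else 0)"
  by (simp add: laguerre_poly_def coeff_sum coeff_monom)

lemma poly_laguerre_poly: "poly (laguerre_poly n \<alpha>) x = laguerre n \<alpha> x"
  by (simp add: laguerre_poly_def laguerre_def poly_sum poly_monom atLeast0AtMost mult_ac)

lemma degree_laguerre_poly: "degree (laguerre_poly n \<alpha>) \<le> n"
  unfolding laguerre_poly_def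
  by (intro degree_sum_le) (auto intro: order.trans[OF degree_monom_le])

lemma laguerre_pos_nonpos:
  assumes "\<alpha> > -1" "x \<le> 0"
  shows "laguerre n \<alpha> x > 0"
  unfolding laguerre_def
proof (rule sum_pos2[where i=0])
  show "0 < (-1) ^ 0 * ((real n + \<alpha>) gchoose (n - 0)) * x ^ 0 / fact 0"
    using gbinomial_pos[of n "real n + \<alpha>"] assms(1) by simp
  fix k assume "k \<in> {0..n}"
  then have "0 \<le> ((real n + \<alpha>) gchoose (n - k)) * (-x) ^ k / fact k"
    using gbinomial_pos[of "n - k" "real n + \<alpha>"] assms
    by (intro divide_nonneg_pos mult_nonneg_nonneg zero_le_power) auto
  then show "0 \<le> (-1) ^ k * ((real n + \<alpha>) gchoose (n - k)) * x ^ k / fact k"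
    by (simp add: power_minus' mult_ac)
qed auto

(* Coefficient form of (t^(b+1) e^(-t) L_p^(b+1)(t))' = (p+1) t^b e^(-t) L_(p+1)^(b)(t). *)
lemma laguerre_poly_param_shift:
  "smult (\<beta> + 1) (laguerre_poly p (\<beta> + 1))
     + pCons 0 (pderiv (laguerre_poly p (\<beta> + 1)) - laguerre_poly p (\<beta> + 1))
   = smult (real (Suc p)) (laguerre_poly (Suc p) \<beta>)"
proof (rule poly_eqI)
  fix k
  define a where "a = real p + (\<beta> + 1)"
  have a: "real p + (\<beta> + 1) = a" "real (Suc p) + \<beta> = a" by (simp_all add: a_def)
  show "coeff (smult (\<beta> + 1) (laguerre_poly p (\<beta> + 1))
      + pCons 0 (pderiv (laguerre_poly p (\<beta> + 1)) - laguerre_poly p (\<beta> + 1))) k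
    = coeff (smult (real (Suc p)) (laguerre_poly (Suc p) \<beta>)) k"
  proof (cases k)
    case 0
    have "(\<beta> + 1) * (a gchoose p) = real (Suc p) * (a gchoose Suc p)"
      using Suc_times_gbinomial_Suc[of p a] by (simp add: a_def)
    then show ?thesis using 0 by (simp add: coeff_laguerre_poly a del: of_nat_Suc)
  next
    case (Suc j)
    consider "j < p" | "j = p" | "j > p" by linarith
    then show ?thesis
    proof cases
      case 1
      define q where "q = p - Suc j"
      have q: "p - j = Suc q" "p - Suc j = q" "Suc p - Suc j = Suc q" "a - real q = \<beta> + 1 + real (Suc j)"
        using 1 by (auto simp: q_def a_def of_nat_diff)
      have pq: "real (Suc p) = real (Suc q) + real (Suc j)"
        using 1 by (simp add: q_def)
      define u :: real where "u = (-1) ^ Suc j / fact (Suc j)"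
      have "coeff (laguerre_poly p (\<beta> + 1)) (Suc j) = u * (a gchoose q)"
        "coeff (laguerre_poly p (\<beta> + 1)) j = - u * real (Suc j) * (a gchoose Suc q)"
        "coeff (laguerre_poly (Suc p) \<beta>) (Suc j) = u * (a gchoose Suc q)"
        using 1 by (simp_all add: coeff_laguerre_poly u_def a q del: of_nat_Suc)
      moreover have "real (Suc q) * (a gchoose Suc q) = (\<beta> + 1 + real (Suc j)) * (a gchoose q)"
        using Suc_times_gbinomial_Suc[of q a] by (simp only: q)
      ultimately show ?thesis using Suc
        by (simp add: coeff_pderiv pq algebra_simps del: of_nat_Suc)
    next
      case 2
      have "fact p + fact p * real p > (0::real)"
        by (simp add: add_pos_nonneg)
      then show ?thesis using 2 Suc by (simp add: coeff_laguerre_poly coeff_pderiv field_simps)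
    next
      case 3
      then show ?thesis using Suc by (simp add: coeff_laguerre_poly coeff_pderiv)
    qed
  qed
qed

lemma has_real_derivative_laguerre_fun:
  assumes "x > 0"
  shows "(laguerre_fun p (\<beta> + 1) has_real_derivative laguerre_fun (Suc p) \<beta> x) (at x)"
proof -
  define L where "L = laguerre_poly p (\<beta> + 1)"
  define K where "K = fact p / Gamma (real p + (\<beta> + 1) + 1)"
  have f: "laguerre_fun p (\<beta> + 1) = (\<lambda>y. K * (y powr (\<beta> + 1) * exp (-y) * poly L y))"
    by (simp add: fun_eq_iff laguerre_fun_def K_def L_def poly_laguerre_poly)
  have "(laguerre_fun p (\<beta> + 1) has_real_derivative
      K * (((\<beta> + 1) * x powr \<beta> * exp (-x) - exp (-x) * x powr (\<beta> + 1)) * poly L x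
         + poly (pderiv L) x * (x powr (\<beta> + 1) * exp (-x)))) (at x)"
    unfolding f using assms
    by (auto intro!: derivative_eq_intros poly_DERIV simp: algebra_simps)
  also have "K * (((\<beta> + 1) * x powr \<beta> * exp (-x) - exp (-x) * x powr (\<beta> + 1)) * poly L x
         + poly (pderiv L) x * (x powr (\<beta> + 1) * exp (-x)))
      = K * x powr \<beta> * exp (-x)
          * poly (smult (\<beta> + 1) L + pCons 0 (pderiv L - L)) x"
    using assms by (simp add: powr_add algebra_simps)
  also have "\<dots> = laguerre_fun (Suc p) \<beta> x"
    unfolding L_def laguerre_poly_param_shift
    by (simp add: laguerre_fun_def K_def poly_laguerre_poly field_simps)
  finally show ?thesis .
qed

lemma has_real_derivative_power_laguerre_fun:
  assumes "x > 0"
  shows "((\<lambda>y. y ^ m / fact m * laguerre_fun p (\<beta> + 1) y) has_real_derivative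
      (if m = 0 then 0 else x ^ (m - 1) / fact (m - 1) * laguerre_fun p (\<beta> + 1) x)
      + x ^ m / fact m * laguerre_fun (Suc p) \<beta> x) (at x)"
proof -
  have "((\<lambda>y. y ^ m / fact m) has_real_derivative
      (if m = 0 then 0 else x ^ (m - 1) / fact (m - 1))) (at x)"
  proof (cases m)
    case (Suc k)
    have "real (Suc k) * x ^ k / fact (Suc k) = x ^ k / fact k"
      by (simp add: field_simps del: of_nat_Suc)
    with DERIV_cdivide[OF DERIV_pow[of "Suc k" x], of "fact (Suc k)"] show ?thesis
      using Suc by simp
  qed simp
  from DERIV_mult[OF this has_real_derivative_laguerre_fun[OF assms, of p \<beta>]] show ?thesis
    by (rule DERIV_cong) (simp add: algebra_simps)
qed

lemma sum_alternating_telescope: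
  "(\<Sum>k=0..i. (-1)^k * (f (Suc k) + f k)) = f 0 + (-1)^i * (f (Suc i) :: 'a :: comm_ring_1)"
  by (induction i) (auto simp: algebra_simps)

definition laguerre_primitive :: "nat \<Rightarrow> nat \<Rightarrow> real \<Rightarrow> real \<Rightarrow> real" where
  "laguerre_primitive n i \<alpha> x = (\<Sum>k=0..i. (-1)^k / fact (i - k) * x ^ (i - k)
      * laguerre_fun (n - 1 - k) (\<alpha> + 1 + real k) x)"

lemma has_real_derivative_laguerre_primitive:
  assumes "i < n" "x > 0"
  shows "(laguerre_primitive n i \<alpha> has_real_derivative x ^ i / fact i * laguerre_fun n \<alpha> x) (at x)"
proof -
  define H where
    "H k = (if k \<le> i then x ^ (i - k) / fact (i - k) * laguerre_fun (n - k) (\<alpha> + real k) x else 0)" for k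
  have "((\<lambda>y. (-1)^k / fact (i - k) * y ^ (i - k) * laguerre_fun (n - 1 - k) (\<alpha> + 1 + real k) y)
      has_real_derivative (-1)^k * (H (Suc k) + H k)) (at x)" if "k \<in> {0..i}" for k
  proof -
    have nk: "n - k = Suc (n - 1 - k)" "n - Suc k = n - 1 - k" and ik: "i - Suc k = i - k - 1"
      and \<alpha>k: "\<alpha> + real (Suc k) = \<alpha> + real k + 1"
      using that assms(1) by auto
    have "H (Suc k) = (if i - k = 0 then 0
        else x ^ (i - k - 1) / fact (i - k - 1) * laguerre_fun (n - 1 - k) (\<alpha> + real k + 1) x)"
      using that unfolding H_def ik nk(2) \<alpha>k by simp
    moreover have "H k = x ^ (i - k) / fact (i - k) * laguerre_fun (Suc (n - 1 - k)) (\<alpha> + real k) x"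
      using that unfolding H_def nk(1) by simp
    moreover have "(\<lambda>y. (-1)^k / fact (i - k) * y ^ (i - k) * laguerre_fun (n - 1 - k) (\<alpha> + 1 + real k) y)
        = (\<lambda>y. (-1)^k * (y ^ (i - k) / fact (i - k) * laguerre_fun (n - 1 - k) (\<alpha> + real k + 1) y))"
      by (simp add: fun_eq_iff algebra_simps)
    ultimately show ?thesis
      using DERIV_cmult[where c = "(-1)^k",
          OF has_real_derivative_power_laguerre_fun[OF assms(2), of "i - k" "n - 1 - k" "\<alpha> + real k"]]
      by simp
  qed
  then have "(laguerre_primitive n i \<alpha> has_real_derivative (\<Sum>k=0..i. (-1)^k * (H (Suc k) + H k))) (at x)"
    unfolding laguerre_primitive_def[abs_def] by (rule DERIV_sum)
  then show ?thesis
    unfolding sum_alternating_telescope by (simp add: H_def)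
qed

lemma laguerre_fun_tendsto_0_at_right:
  assumes "\<beta> > 0"
  shows "(laguerre_fun p \<beta> \<longlongrightarrow> 0) (at_right 0)"
proof -
  have "((\<lambda>x::real. x powr \<beta>) \<longlongrightarrow> 0) (at_right 0)"
    using assms by real_asymp
  then have "((\<lambda>x. fact p / Gamma (real p + \<beta> + 1) * x powr \<beta> * exp (- x) * laguerre p \<beta> x) \<longlongrightarrow>
      fact p / Gamma (real p + \<beta> + 1) * 0 * exp (- 0) * laguerre p \<beta> 0) (at_right 0)"
    unfolding laguerre_def by (intro tendsto_intros) auto
  then show ?thesis
    by (simp add: laguerre_fun_def[abs_def])
qed

lemma power_times_laguerre_fun_tendsto_0_at_top:
  "((\<lambda>x. x ^ j * laguerre_fun p \<beta> x) \<longlongrightarrow> 0) at_top"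
proof -
  define K where "K = fact p / Gamma (real p + \<beta> + 1)"
  define c where "c k = (-1)^k * ((real p + \<beta>) gchoose (p - k)) / fact k" for k
  have "x ^ j * laguerre_fun p \<beta> x = (\<Sum>k=0..p. K * c k * (x ^ (j + k) * x powr \<beta> * exp (-x)))" for x
    unfolding laguerre_fun_def laguerre_def K_def c_def sum_distrib_left
    by (intro sum.cong refl) (simp add: power_add algebra_simps)
  moreover have "((\<lambda>x::real. x ^ q * x powr \<beta> * exp (-x)) \<longlongrightarrow> 0) at_top" for q
    by real_asymp
  ultimately show ?thesis
    by (simp only:) (intro tendsto_null_sum tendsto_mult_right_zero)
qed

lemma laguerre_primitive_tendsto_0_at_right:
  assumes "\<alpha> > -1"
  shows "(laguerre_primitive n i \<alpha> \<longlongrightarrow> 0) (at_right 0)"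
  unfolding laguerre_primitive_def[abs_def]
proof (intro tendsto_null_sum)
  fix k
  have "((\<lambda>x. (-1)^k / fact (i - k) * x ^ (i - k) * laguerre_fun (n - 1 - k) (\<alpha> + 1 + real k) x) \<longlongrightarrow>
       (-1)^k / fact (i - k) * 0 ^ (i - k) * 0) (at_right 0)"
    using assms by (intro tendsto_intros laguerre_fun_tendsto_0_at_right) auto
  then show "((\<lambda>x. (-1)^k / fact (i - k) * x ^ (i - k) * laguerre_fun (n - 1 - k) (\<alpha> + 1 + real k) x)
      \<longlongrightarrow> 0) (at_right 0)"
    by simp
qed

lemma laguerre_primitive_tendsto_0_at_top: "(laguerre_primitive n i \<alpha> \<longlongrightarrow> 0) at_top"
  unfolding laguerre_primitive_def[abs_def] mult.assoc
  by (intro tendsto_null_sum tendsto_mult_right_zero power_times_laguerre_fun_tendsto_0_at_top)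

lemma prod_linear_factors_dvd:
  fixes p :: "'a :: idom poly"
  assumes "finite S" "\<And>a. a \<in> S \<Longrightarrow> poly p a = 0"
  shows "(\<Prod>a\<in>S. [:-a, 1:]) dvd p"
  using assms
proof (induction S arbitrary: p rule: finite_induct)
  case (insert a S)
  have "poly p a = 0"
    using insert.prems by simp
  then obtain r where r: "p = [:-a, 1:] * r"
    unfolding poly_eq_0_iff_dvd by (rule dvdE)
  have "poly r b = 0" if "b \<in> S" for b
    using insert.prems[of b] insert.hyps(2) that by (auto simp: r)
  then have "(\<Prod>a\<in>S. [:-a, 1:]) dvd r"
    by (rule insert.IH)
  then show ?case
    unfolding r prod.insert[OF insert.hyps] by (rule mult_dvd_mono[OF dvd_refl])
qed simp

lemma poly_eq_lead_coeff_prod_roots: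
  fixes p :: "'a :: idom poly"
  assumes "p \<noteq> 0" "finite S" "degree p \<le> card S" "\<And>a. a \<in> S \<Longrightarrow> poly p a = 0"
  shows "poly p x = lead_coeff p * (\<Prod>a\<in>S. x - a)"
proof -
  define q where "q = (\<Prod>a\<in>S. [:-a, 1:])"
  obtain r where r: "p = q * r"
    using prod_linear_factors_dvd[OF assms(2,4)] unfolding q_def by (auto elim: dvdE)
  have lead_q: "lead_coeff q = 1"
    unfolding q_def lead_coeff_prod by simp
  have "degree q = card S"
    using assms(2) unfolding q_def by (simp add: degree_prod_eq_sum_degree)
  moreover have "q \<noteq> 0" "r \<noteq> 0"
    using assms(1) r by auto
  ultimately have "degree r = 0"
    using assms(3) r by (simp add: degree_mult_eq)
  then obtain c where c: "r = [:c:]"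
    by (rule degree_eq_zeroE)
  have "lead_coeff p = c"
    unfolding r c lead_coeff_mult lead_q by simp
  then show ?thesis
    by (simp add: r c q_def poly_prod)
qed

lemma laguerre_roots_pos:
  assumes "\<alpha> > -1" "t ` A \<subseteq> {x. laguerre n \<alpha> x = 0}" "m \<in> A"
  shows "t m > 0"
  using laguerre_pos_nonpos[OF assms(1), of "t m" n] assms(2,3) by force

lemma laguerre_eq_prod_roots:
  assumes "\<alpha> > -1" "inj_on t {1..n}" "t ` {1..n} \<subseteq> {x. laguerre n \<alpha> x = 0}"
  shows "laguerre n \<alpha> x = lead_coeff (laguerre_poly n \<alpha>) * (\<Prod>m\<in>{1..n}. x - t m)"
proof -
  have "laguerre_poly n \<alpha> \<noteq> 0"
    using laguerre_pos_nonpos[OF assms(1), of 0 n] by (auto simp flip: poly_laguerre_poly)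
  moreover have "degree (laguerre_poly n \<alpha>) \<le> card (t ` {1..n})"
    using degree_laguerre_poly[of n \<alpha>] card_image[OF assms(2)] by simp
  ultimately have "poly (laguerre_poly n \<alpha>) x = lead_coeff (laguerre_poly n \<alpha>) * (\<Prod>a\<in>t ` {1..n}. x - a)"
    using assms(3) by (intro poly_eq_lead_coeff_prod_roots) (auto simp: poly_laguerre_poly)
  then show ?thesis
    unfolding poly_laguerre_poly prod.reindex[OF assms(2)] comp_def .
qed

lemma abs_laguerre_between_roots:
  assumes "\<alpha> > -1" "inj_on t {1..n}" "t ` {1..n} \<subseteq> {x. laguerre n \<alpha> x = 0}"
    and "j \<le> n" "\<And>m. m \<in> {1..j} \<Longrightarrow> t m < x" "\<And>m. m \<in> {Suc j..n} \<Longrightarrow> x < t m"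
  shows "\<bar>laguerre n \<alpha> x\<bar> = (-1)^j * laguerre n \<alpha> x"
proof -
  define c where "c = lead_coeff (laguerre_poly n \<alpha>)"
  note L = laguerre_eq_prod_roots[OF assms(1-3), folded c_def]
  have "laguerre n \<alpha> 0 = c * (-1)^n * (\<Prod>m\<in>{1..n}. t m)"
    using L[of 0] prod_uminus[of t "{1..n}"] by simp
  moreover have "laguerre n \<alpha> 0 > 0"
    using laguerre_pos_nonpos[OF assms(1)] by simp
  moreover have "(\<Prod>m\<in>{1..n}. t m) > 0"
    using laguerre_roots_pos[OF assms(1,3)] by (intro prod_pos) auto
  ultimately have c: "c * (-1)^n > 0"
    by (metis zero_less_mult_pos2)
  define P where "P = (\<Prod>m\<in>{1..j}. x - t m) * (\<Prod>m\<in>{Suc j..n}. t m - x)"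
  have "{1..n} = {1..j} \<union> {Suc j..n}" "{1..j} \<inter> {Suc j..n} = {}"
    using assms(4) by auto
  then have "(\<Prod>m\<in>{1..n}. x - t m) = (-1)^(n - j) * P"
    using prod_uminus[of "\<lambda>m. t m - x" "{Suc j..n}"] by (simp add: P_def prod.union_disjoint)
  then have "(-1)^j * laguerre n \<alpha> x = c * ((-1)^j * (-1)^(n - j)) * P"
    using L[of x] by (simp only: mult_ac)
  also have "\<dots> = c * (-1)^n * P"
    using assms(4) by (simp flip: power_add)
  also have "\<dots> > 0"
    using c assms(5,6) unfolding P_def by (intro mult_pos_pos[OF c] mult_pos_pos prod_pos) auto
  finally have "\<bar>(-1)^j * laguerre n \<alpha> x\<bar> = (-1)^j * laguerre n \<alpha> x"
    by simp
  then show ?thesis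
    by (simp add: abs_mult power_abs)
qed

definition node :: "nat \<Rightarrow> (nat \<Rightarrow> real) \<Rightarrow> nat \<Rightarrow> ereal" where
  "node n t j = (if j = 0 then 0 else if j \<le> n then ereal (t j) else \<infinity>)"

lemma node_less:
  assumes "strict_mono_on {1..n} t" "\<And>m. m \<in> {1..n} \<Longrightarrow> t m > 0" "j < k" "k \<le> Suc n"
  shows "node n t j < node n t k"
  using assms strict_mono_onD[OF assms(1), of j k] by (auto simp: node_def)

lemma mono_node:
  assumes "strict_mono_on {1..n} t" "\<And>m. m \<in> {1..n} \<Longrightarrow> t m > 0"
  shows "mono (node n t)"
proof
  fix j k :: nat assume "j \<le> k"
  then show "node n t j \<le> node n t k"
    using node_less[OF assms, of j k] by (cases "j = k \<or> Suc n < k") (auto simp: node_def)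
qed

lemma indicator_einterval_split:
  fixes T :: "nat \<Rightarrow> ereal"
  assumes "mono T" "ereal x \<notin> T ` {1..N}"
  shows "indicator (einterval (T 0) (T (Suc N))) x = (\<Sum>j\<le>N. indicator (einterval (T j) (T (Suc j))) x :: real)"
  using assms(2)
proof (induction N)
  case (Suc N)
  have "T 0 \<le> T (Suc N)" "T (Suc N) \<le> T (Suc (Suc N))" "ereal x \<noteq> T (Suc N)"
    using Suc.prems monoD[OF assms(1)] by auto
  then have "indicator (einterval (T 0) (T (Suc (Suc N)))) x
      = indicator (einterval (T 0) (T (Suc N))) x + (indicator (einterval (T (Suc N)) (T (Suc (Suc N)))) x :: real)"
    by (auto simp: indicator_def einterval_iff)
  moreover have "ereal x \<notin> T ` {1..N}"
    using Suc.prems by auto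
  ultimately show ?case
    using Suc.IH by simp
qed simp

lemma laguerre_fun_on_node_interval:
  assumes "\<alpha> > -1" "strict_mono_on {1..n} t" "t ` {1..n} \<subseteq> {x. laguerre n \<alpha> x = 0}"
    and "j \<le> n" "node n t j < ereal x" "ereal x < node n t (Suc j)"
  shows "x > 0" "\<bar>laguerre_fun n \<alpha> x\<bar> = (-1)^j * laguerre_fun n \<alpha> x"
proof -
  have mono: "mono (node n t)"
    using mono_node[OF assms(2)] laguerre_roots_pos[OF assms(1,3)] by blast
  have "node n t 0 < ereal x"
    using monoD[OF mono, of 0 j] assms(5) by simp
  then show "x > 0"
    by (simp add: node_def)
  have "t m < x" if "m \<in> {1..j}" for m
    using monoD[OF mono, of m j] assms(4,5) that by (auto simp: node_def)
  moreover have "x < t m" if "m \<in> {Suc j..n}" for m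
    using monoD[OF mono, of "Suc j" m] assms(6) that by (auto simp: node_def)
  ultimately have "\<bar>laguerre n \<alpha> x\<bar> = (-1)^j * laguerre n \<alpha> x"
    using abs_laguerre_between_roots[OF assms(1) strict_mono_on_imp_inj_on[OF assms(2)] assms(3,4)]
    by blast
  moreover have "Gamma (real n + \<alpha> + 1) > 0"
    using assms(1) by (intro Gamma_real_pos) simp
  ultimately show "\<bar>laguerre_fun n \<alpha> x\<bar> = (-1)^j * laguerre_fun n \<alpha> x"
    by (simp add: laguerre_fun_def abs_mult)
qed

lemma indicator_pos_eq_sum_node_intervals:
  assumes "strict_mono_on {1..n} t" "\<And>m. m \<in> {1..n} \<Longrightarrow> t m > 0" "ereal x \<notin> node n t ` {1..n}"
  shows "indicator {0<..} x = (\<Sum>j\<le>n. indicator (einterval (node n t j) (node n t (Suc j))) x :: real)"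
proof -
  have "einterval (node n t 0) (node n t (Suc n)) = {0<..}"
    by (auto simp: node_def einterval_iff)
  then show ?thesis
    using indicator_einterval_split[OF mono_node[OF assms(1,2)] assms(3)] by simp
qed

(* The values at the nodes 0 and oo are the limits of the primitive there. *)
definition primitive_at_node :: "nat \<Rightarrow> nat \<Rightarrow> real \<Rightarrow> (nat \<Rightarrow> real) \<Rightarrow> nat \<Rightarrow> real" where
  "primitive_at_node n i \<alpha> t j = (if j = 0 \<or> n < j then 0 else laguerre_primitive n i \<alpha> (t j))"

lemma laguerre_primitive_tendsto_at_node:
  assumes "\<alpha> > -1" "i < n" "t ` {1..n} \<subseteq> {x. laguerre n \<alpha> x = 0}" "j \<le> Suc n"
  shows "j \<le> n \<Longrightarrow> ((laguerre_primitive n i \<alpha> \<circ> real_of_ereal) \<longlongrightarrow> primitive_at_node n i \<alpha> t j)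
      (at_right (node n t j))"
    and "0 < j \<Longrightarrow> ((laguerre_primitive n i \<alpha> \<circ> real_of_ereal) \<longlongrightarrow> primitive_at_node n i \<alpha> t j)
      (at_left (node n t j))"
proof -
  have cont: "(laguerre_primitive n i \<alpha> \<longlongrightarrow> laguerre_primitive n i \<alpha> (t j)) (at (t j))" if "j \<in> {1..n}"
    using DERIV_isCont[OF has_real_derivative_laguerre_primitive[OF assms(2)]]
      laguerre_roots_pos[OF assms(1,3)] that
    by (simp add: isCont_def)
  show "j \<le> n \<Longrightarrow> ((laguerre_primitive n i \<alpha> \<circ> real_of_ereal) \<longlongrightarrow> primitive_at_node n i \<alpha> t j)
      (at_right (node n t j))"
    using cont laguerre_primitive_tendsto_0_at_right[OF assms(1)]
    by (cases "j = 0") (auto simp: node_def primitive_at_node_def zero_ereal_def ereal_tendsto_simps1 filterlim_at_split)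
  show "0 < j \<Longrightarrow> ((laguerre_primitive n i \<alpha> \<circ> real_of_ereal) \<longlongrightarrow> primitive_at_node n i \<alpha> t j)
      (at_left (node n t j))"
    using cont laguerre_primitive_tendsto_0_at_top assms(4)
    by (cases "j = Suc n") (auto simp: node_def primitive_at_node_def ereal_tendsto_simps1 filterlim_at_split)
qed

lemma laguerre_moment_on_node_interval:
  assumes \<alpha>: "\<alpha> > -1" and i: "i < n" and t: "strict_mono_on {1..n} t"
    and roots: "t ` {1..n} \<subseteq> {x. laguerre n \<alpha> x = 0}" and j: "j \<le> n"
  defines "g \<equiv> \<lambda>x. x ^ i / fact i * \<bar>laguerre_fun n \<alpha> x\<bar>"
  shows "set_integrable lborel (einterval (node n t j) (node n t (Suc j))) g"
    and "(LINT x:einterval (node n t j) (node n t (Suc j))|lborel. g x)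
      = (-1)^j * (primitive_at_node n i \<alpha> t (Suc j) - primitive_at_node n i \<alpha> t j)"
proof -
  let ?a = "node n t j" and ?b = "node n t (Suc j)"
  have on_interval: "x > 0" "\<bar>laguerre_fun n \<alpha> x\<bar> = (-1)^j * laguerre_fun n \<alpha> x"
    if "?a < ereal x" "ereal x < ?b" for x
    using laguerre_fun_on_node_interval[of \<alpha> n t j x] \<alpha> t roots j that by auto
  have ab: "?a < ?b"
    using node_less[OF t laguerre_roots_pos[OF \<alpha> roots], of j "Suc j"] j by simp
  have deriv: "((\<lambda>x. (-1)^j * laguerre_primitive n i \<alpha> x) has_real_derivative g x) (at x)"
    if "?a < ereal x" "ereal x < ?b" for x
    using DERIV_cmult[OF has_real_derivative_laguerre_primitive[OF i on_interval(1)[OF that], of \<alpha>],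
        where c = "(-1)^j"]
      on_interval(2)[OF that]
    by (simp add: g_def mult_ac)
  have cont: "isCont g x" if "?a < ereal x" "ereal x < ?b" for x
    using on_interval(1)[OF that]
    unfolding g_def laguerre_fun_def laguerre_def by (intro continuous_intros) auto
  have nonneg: "AE x in lborel. ?a < ereal x \<longrightarrow> ereal x < ?b \<longrightarrow> 0 \<le> g x"
  proof (intro AE_I2 impI)
    fix x assume "?a < ereal x" "ereal x < ?b"
    then have "x > 0"
      by (rule on_interval(1))
    then show "0 \<le> g x"
      by (simp add: g_def)
  qed
  have "((laguerre_primitive n i \<alpha> \<circ> real_of_ereal) \<longlongrightarrow> primitive_at_node n i \<alpha> t j) (at_right ?a)"
    "((laguerre_primitive n i \<alpha> \<circ> real_of_ereal) \<longlongrightarrow> primitive_at_node n i \<alpha> t (Suc j)) (at_left ?b)"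
    using laguerre_primitive_tendsto_at_node[of \<alpha> i n t] \<alpha> i roots j by simp_all
  then have lim: "(((\<lambda>x. (-1)^j * laguerre_primitive n i \<alpha> x) \<circ> real_of_ereal)
      \<longlongrightarrow> (-1)^j * primitive_at_node n i \<alpha> t j) (at_right ?a)"
    "(((\<lambda>x. (-1)^j * laguerre_primitive n i \<alpha> x) \<circ> real_of_ereal)
      \<longlongrightarrow> (-1)^j * primitive_at_node n i \<alpha> t (Suc j)) (at_left ?b)"
    by (auto simp: comp_def intro: tendsto_mult_left)
  note FTC = interval_integral_FTC_nonneg[OF ab deriv cont nonneg lim]
  from FTC show "set_integrable lborel (einterval ?a ?b) g"
    "(LINT x:einterval ?a ?b|lborel. g x) = (-1)^j * (primitive_at_node n i \<alpha> t (Suc j) - primitive_at_node n i \<alpha> t j)"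
    using less_imp_le[OF ab] by (simp_all add: interval_lebesgue_integral_def right_diff_distrib)
qed

lemma sum_alternating_differences:
  "(\<Sum>j\<le>N. (-1)^j * (f (Suc j) - f j))
    = (-1)^N * f (Suc N) - f 0 + 2 * (\<Sum>m=1..N. (-1)^(m+1) * (f m :: 'a :: comm_ring_1))"
  by (induction N) (auto simp: algebra_simps)

theorem theorem2p3:
  fixes n i :: nat and \<alpha> :: real and t :: "nat \<Rightarrow> real"
  assumes "\<alpha> > -1" and "i \<le> n - 1" and "n \<ge> 1"
    and "strict_mono_on {1..n} t"
    and "t ` {1..n} = {x. laguerre n \<alpha> x = 0}"
  shows "set_integrable lborel {0<..} (\<lambda>x. x ^ i / fact i * \<bar>laguerre_fun n \<alpha> x\<bar>)
    \<and> (LINT x:{0<..}|lborel. x ^ i / fact i * \<bar>laguerre_fun n \<alpha> x\<bar>) =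
      2 * (\<Sum>m=1..n. (-1)^(m+1) * (\<Sum>k=0..i. (-1)^k / fact (i - k) * t m ^ (i - k)
            * laguerre_fun (n - 1 - k) (\<alpha> + 1 + real k) (t m)))"
proof -
  let ?g = "\<lambda>x. x ^ i / fact i * \<bar>laguerre_fun n \<alpha> x\<bar>"
  let ?P = "\<lambda>j. einterval (node n t j) (node n t (Suc j))"
  have i: "i < n"
    using assms(2,3) by linarith
  have roots: "t ` {1..n} \<subseteq> {x. laguerre n \<alpha> x = 0}"
    using assms(5) by simp
  note pieces = laguerre_moment_on_node_interval[OF assms(1) i assms(4) roots]
  have split: "indicator {0<..} x *\<^sub>R ?g x = (\<Sum>j\<le>n. indicator (?P j) x *\<^sub>R ?g x)" for x
  proof (cases "ereal x \<in> node n t ` {1..n}")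
    case True
    then have "laguerre n \<alpha> x = 0"
      using roots by (auto simp: node_def)
    then show ?thesis
      by (simp add: laguerre_fun_def)
  next
    case False
    then have "indicator {0<..} x = (\<Sum>j\<le>n. indicator (?P j) x :: real)"
      using indicator_pos_eq_sum_node_intervals[of n t x] assms(4) laguerre_roots_pos[OF assms(1) roots]
      by simp
    then show ?thesis
      by (simp only: scaleR_sum_left)
  qed
  have integrable: "set_integrable lborel {0<..} ?g"
    unfolding set_integrable_def split using pieces(1)
    by (intro Bochner_Integration.integrable_sum) (simp add: set_integrable_def)
  have "(LINT x:{0<..}|lborel. ?g x) = (\<Sum>j\<le>n. LINT x:?P j|lborel. ?g x)"
    unfolding set_lebesgue_integral_def split using pieces(1)
    by (intro Bochner_Integration.integral_sum) (simp add: set_integrable_def)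
  also have "\<dots> = (\<Sum>j\<le>n. (-1)^j * (primitive_at_node n i \<alpha> t (Suc j) - primitive_at_node n i \<alpha> t j))"
    using pieces(2) by simp
  also have "\<dots> = 2 * (\<Sum>m=1..n. (-1)^(m+1) * primitive_at_node n i \<alpha> t m)"
    unfolding sum_alternating_differences by (simp add: primitive_at_node_def)
  also have "\<dots> = 2 * (\<Sum>m=1..n. (-1)^(m+1) * laguerre_primitive n i \<alpha> (t m))"
    by (intro arg_cong[where f = "(*) 2"] sum.cong) (auto simp: primitive_at_node_def)
  finally show ?thesis
    using integrable by (simp add: laguerre_primitive_def)
qed

end
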